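(* Let $n\ge1$ and $m\ge0$, and let $0$ denote the all-zero vertex of the Yoke graph $Y_{n,m}$. Then: (1) If $n=1$, then $\operatorname{ecc}_{Y_{n,m}}(0)=\binom{\lceil m/2\rceil+1}{2}+\binom{\lfloor m/2\rfloor+1}{2}$. (2) If $0\le m\le n$, then $\operatorname{ecc}_{Y_{n,m}}(0)=\lfloor n(m+1)/2\rfloor$. (3) If $2\le n\le m$, let $d_0=\binom{\lfloor (m+n)/2\rfloor+1}{2}+\binom{\lceil (m-n)/2\rceil+1}{2}$. Then (a) if either $2\mid(m-n)$ or $n\le\lceil (m+1)/2\rceil$, then $\operatorname{ecc}_{Y_{n,m}}(0)=d_0$; (b) otherwise $\operatorname{ecc}_{Y_{n,m}}(0)=d_0+n-\lceil (m+1)/2\rceil$.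
   Context: For integers $n\ge1$, $m\ge0$, the Yoke graph $Y_{n,m}$ is the simple graph whose vertices are the tuples $v=(v_0,v_1,\dots,v_m,v_{m+1})$ with $v_0,v_{m+1}\in\mathbb{Z}_n$ (the "buckets"), $v_1,\dots,v_m\in\{0,1\}$, and $\sum_{i=0}^{m+1}v_i\equiv 0\pmod n$ (buckets identified with their least non-negative representatives). Two vertices $u,v$ are adjacent iff there is $0\le i\le m$ such that $u_j=v_j$ for all $j\notin\{i,i+1\}$ and either ($u_i=v_i+1$ and $u_{i+1}=v_{i+1}-1$) or ($u_i=v_i-1$ and $u_{i+1}=v_{i+1}+1$), bucket entries computed modulo $n$. The eccentricity $\operatorname{ecc}_G(x)$ of a vertex $x$ is the maximum graph distance from $x$ to any vertex of $G$. *)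

theory Defs
  imports Main
begin

text \<open>A vertex of the Yoke graph Y(n,m) is represented as an integer list
  v = [v_0, v_1, ..., v_m, v_(m+1)] of length m+2; positions 0 and m+1 are the
  buckets (least non-negative residues mod n), the inner positions are 0/1.\<close>

definition yoke_vert :: "nat \<Rightarrow> nat \<Rightarrow> int list \<Rightarrow> bool" where
  "yoke_vert n m v \<longleftrightarrow>
     length v = m + 2 \<and>
     0 \<le> v ! 0 \<and> v ! 0 < int n \<and>
     0 \<le> v ! (m + 1) \<and> v ! (m + 1) < int n \<and>
     (\<forall>i. 1 \<le> i \<and> i \<le> m \<longrightarrow> v ! i \<in> {0, 1}) \<and>
     sum_list v mod int n = 0"

definition yoke_ent :: "nat \<Rightarrow> nat \<Rightarrow> nat \<Rightarrow> int \<Rightarrow> int" where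
  "yoke_ent n m j x = (if j = 0 \<or> j = m + 1 then x mod int n else x)"

definition yoke_adj :: "nat \<Rightarrow> nat \<Rightarrow> int list \<Rightarrow> int list \<Rightarrow> bool" where
  "yoke_adj n m u v \<longleftrightarrow>
     yoke_vert n m u \<and> yoke_vert n m v \<and> u \<noteq> v \<and>
     (\<exists>i \<le> m.
        (\<forall>j < m + 2. j \<noteq> i \<and> j \<noteq> i + 1 \<longrightarrow> u ! j = v ! j) \<and>
        ((u ! i = yoke_ent n m i (v ! i + 1) \<and>
          u ! (i + 1) = yoke_ent n m (i + 1) (v ! (i + 1) - 1)) \<or>
         (u ! i = yoke_ent n m i (v ! i - 1) \<and>
          u ! (i + 1) = yoke_ent n m (i + 1) (v ! (i + 1) + 1))))"

definition yoke_dist :: "nat \<Rightarrow> nat \<Rightarrow> int list \<Rightarrow> int list \<Rightarrow> nat" where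
  "yoke_dist n m u v = (LEAST k. (yoke_adj n m ^^ k) u v)"

definition yoke_ecc :: "nat \<Rightarrow> nat \<Rightarrow> int list \<Rightarrow> nat" where
  "yoke_ecc n m x = Max {yoke_dist n m x v | v. yoke_vert n m v}"

definition yoke_zero :: "nat \<Rightarrow> int list" where
  "yoke_zero m = replicate (m + 2) 0"

end

theory Submission
  imports Defs
begin

text \<open>A vertex is encoded by a height function f on [0, m] that drops by 0 or 1 at each step:
  the drops are the inner entries, and the buckets are - f 0 and f m modulo n. The height
  function is unique up to adding a multiple of n, and moving a token across edge i changes f i
  by one. Hence the distance from 0 is the least weight of f + t n over t, and writing f = r - p
  with a staircase p (p 0 = 0, unit steps up) the eccentricity is the largest value, over p and
  r, of the least value of the sum of absolute deviations abs_dev m p c on the class r + n Z.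

  For the upper bound, p is extended to Z with slope 1 outside [0, m]. The extension is
  1-Lipschitz, so abs_dev m p at its values is bounded by the same sum for the identity. Either
  some point of a window around m/2 is mapped into the class of r, or the nearest such points on
  both sides of the window have values at most n apart, and the average of the two sums is small.
  For the lower bounds, abs_dev m p is monotone on both sides of the median of p, so it is enough
  to look at two consecutive points of the class; the witnesses are the identity staircase and
  the identity with one value repeated.\<close>

section \<open>Height functions\<close>

definition height_fun :: "nat \<Rightarrow> (nat \<Rightarrow> int) \<Rightarrow> bool" where
  "height_fun m f \<longleftrightarrow> (\<forall>j<m. f j - f (Suc j) \<in> {0, 1})"

definition yoke_vtx :: "nat \<Rightarrow> nat \<Rightarrow> (nat \<Rightarrow> int) \<Rightarrow> int list" where
  "yoke_vtx n m f = map (\<lambda>j. if j = 0 then (- f 0) mod int n else if j = m + 1 then f m mod int n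
                             else f (j - 1) - f j) [0..<m + 2]"

definition height_weight :: "nat \<Rightarrow> (nat \<Rightarrow> int) \<Rightarrow> int" where
  "height_weight m f = (\<Sum>j\<le>m. \<bar>f j\<bar>)"

lemma length_yoke_vtx [simp]: "length (yoke_vtx n m f) = m + 2"
  by (simp add: yoke_vtx_def)

lemma yoke_vtx_nth:
  "j < m + 2 \<Longrightarrow> yoke_vtx n m f ! j =
     (if j = 0 then (- f 0) mod int n else if j = m + 1 then f m mod int n else f (j - 1) - f j)"
  unfolding yoke_vtx_def by (simp del: upt_Suc)

lemma yoke_vtx_cong: "(\<And>j. j \<le> m \<Longrightarrow> f j = g j) \<Longrightarrow> yoke_vtx n m f = yoke_vtx n m g"
  by (intro nth_equalityI) (auto simp: yoke_vtx_nth)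

lemma yoke_vtx_shift: "yoke_vtx n m (\<lambda>j. f j + t * int n) = yoke_vtx n m f"
proof (intro nth_equalityI)
  have "(- (f 0 + t * int n)) mod int n = (- f 0) mod int n"
    by (metis add.commute minus_add_distrib mod_mult_self3 mult_minus_left)
  then show "yoke_vtx n m (\<lambda>j. f j + t * int n) ! j = yoke_vtx n m f ! j"
    if "j < length (yoke_vtx n m (\<lambda>j. f j + t * int n))" for j
    using that by (simp add: yoke_vtx_nth)
qed simp

lemma yoke_zero_eq_yoke_vtx: "yoke_zero m = yoke_vtx n m (\<lambda>_. 0)"
proof (intro nth_equalityI)
  show "yoke_zero m ! j = yoke_vtx n m (\<lambda>_. 0) ! j" if "j < length (yoke_zero m)" for j
    using that by (simp add: yoke_zero_def yoke_vtx_nth del: replicate.simps)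
qed (simp add: yoke_zero_def)

lemma height_fun_antimono: "height_fun m f \<Longrightarrow> j \<le> l \<Longrightarrow> l \<le> m \<Longrightarrow> f l \<le> f j"
proof (induction l)
  case (Suc l)
  show ?case
  proof (cases "j = Suc l")
    case False
    then have "f l \<le> f j"
      using Suc by simp
    moreover have "f l - f (Suc l) \<in> {0, 1}"
      using Suc.prems unfolding height_fun_def by auto
    ultimately show ?thesis
      by auto
  qed simp
qed simp

lemma yoke_vert_yoke_vtx:
  assumes "n \<ge> 1" and f: "height_fun m f"
  shows "yoke_vert n m (yoke_vtx n m f)"
proof -
  let ?h = "\<lambda>j. if j = 0 then (- f 0) mod int n else if j = m + 1 then f m mod int n
                else f (j - 1) - f j"
  have "sum_list (yoke_vtx n m f) = (\<Sum>j<m + 2. ?h j)"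
    unfolding yoke_vtx_def by (simp add: interv_sum_list_conv_sum_set_nat atLeast0LessThan del: upt_Suc)
  also have "\<dots> = (\<Sum>j<Suc m. ?h j) + ?h (m + 1)"
    by simp
  also have "(\<Sum>j<Suc m. ?h j) = ?h 0 + (\<Sum>j<m. ?h (Suc j))"
    by (rule sum.lessThan_Suc_shift)
  also have "(\<Sum>j<m. ?h (Suc j)) = (\<Sum>j<m. f j - f (Suc j))"
    by (rule sum.cong) auto
  also have "\<dots> = f 0 - f m"
    by (rule sum_lessThan_telescope')
  finally have "sum_list (yoke_vtx n m f) mod int n = (- f 0 + (f 0 - f m) + f m) mod int n"
    by (simp add: mod_simps)
  moreover have "yoke_vtx n m f ! i \<in> {0, 1}" if "1 \<le> i" "i \<le> m" for i
  proof -
    have "i - 1 < m" "Suc (i - 1) = i"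
      using that by auto
    then have "f (i - 1) - f i \<in> {0, 1}"
      using f unfolding height_fun_def by metis
    then show ?thesis
      using that by (simp add: yoke_vtx_nth)
  qed
  ultimately show ?thesis
    using \<open>n \<ge> 1\<close> by (simp add: yoke_vert_def yoke_vtx_nth)
qed

lemma yoke_vert_obtains_height_fun:
  assumes v: "yoke_vert n m v"
  obtains f where "height_fun m f" "v = yoke_vtx n m f"
proof
  define f where "f j = - v ! 0 - (\<Sum>l<j. v ! Suc l)" for j
  have drop: "f j - f (Suc j) = v ! Suc j" for j
    by (simp add: f_def)
  have len: "length v = m + 2"
    and bounds: "0 \<le> v ! 0" "v ! 0 < int n" "0 \<le> v ! (m + 1)" "v ! (m + 1) < int n"
    and sum: "sum_list v mod int n = 0"
    using v by (simp_all add: yoke_vert_def)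
  show "height_fun m f"
    using v by (auto simp: height_fun_def drop yoke_vert_def)
  have "sum_list v = (\<Sum>j<Suc m. v ! j) + v ! (m + 1)"
    by (simp add: sum_list_sum_nth len atLeast0LessThan)
  also have "(\<Sum>j<Suc m. v ! j) = v ! 0 + (\<Sum>j<m. v ! Suc j)"
    by (rule sum.lessThan_Suc_shift)
  finally have "f m = v ! (m + 1) - sum_list v"
    by (simp add: f_def)
  then have "f m mod int n = (v ! (m + 1) - 0) mod int n"
    using sum by (metis mod_diff_right_eq)
  then have "f m mod int n = v ! (m + 1)"
    using bounds by simp
  moreover have "(- f 0) mod int n = v ! 0"
    using bounds by (simp add: f_def)
  moreover have "v ! j = f (j - 1) - f j" if "0 < j" for j
    using drop[of "j - 1"] that by simp
  ultimately show "v = yoke_vtx n m f"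
    by (intro nth_equalityI) (auto simp: len yoke_vtx_nth)
qed

lemma yoke_vtx_eq_imp_shift:
  assumes "yoke_vtx n m g = yoke_vtx n m f"
  obtains t where "\<And>j. j \<le> m \<Longrightarrow> g j = f j + t * int n"
proof -
  have entry: "yoke_vtx n m g ! j = yoke_vtx n m f ! j" for j
    using assms by simp
  have drops: "g j = f j - (f 0 - g 0)" if "j \<le> m" for j
    using that
  proof (induction j)
    case (Suc j)
    then show ?case
      using entry[of "Suc j"] by (simp add: yoke_vtx_nth)
  qed simp
  have "(- g 0) mod int n = (- f 0) mod int n"
    using entry[of 0] by (simp add: yoke_vtx_nth)
  then have "int n dvd (f 0 - g 0)"
    by (simp add: mod_eq_dvd_iff)
  then obtain t where t: "f 0 - g 0 = int n * t"
    by (rule dvdE)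
  have "g j = f j + (- t) * int n" if "j \<le> m" for j
    using drops[OF that] unfolding t by simp
  with that show thesis
    by blast
qed

lemma yoke_vtx_upd_nth:
  assumes "i \<le> m"
  shows "yoke_vtx n m f ! i = yoke_ent n m i (yoke_vtx n m (f(i := f i + d)) ! i + d)"
    and "yoke_vtx n m f ! (i + 1) =
           yoke_ent n m (i + 1) (yoke_vtx n m (f(i := f i + d)) ! (i + 1) - d)"
proof -
  show "yoke_vtx n m f ! i = yoke_ent n m i (yoke_vtx n m (f(i := f i + d)) ! i + d)"
  proof (cases "i = 0")
    case True
    have "(- f 0) mod int n = ((- (f 0 + d)) mod int n + d) mod int n"
      by (simp add: mod_simps)
    then show ?thesis
      using True by (simp add: yoke_vtx_nth yoke_ent_def)
  qed (use assms in \<open>auto simp: yoke_vtx_nth yoke_ent_def\<close>)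
  show "yoke_vtx n m f ! (i + 1) =
          yoke_ent n m (i + 1) (yoke_vtx n m (f(i := f i + d)) ! (i + 1) - d)"
  proof (cases "i = m")
    case True
    have "f m mod int n = ((f m + d) mod int n - d) mod int n"
      by (simp add: mod_simps)
    then show ?thesis
      using True by (simp add: yoke_vtx_nth yoke_ent_def)
  qed (use assms in \<open>simp add: yoke_vtx_nth yoke_ent_def\<close>)
qed

lemma yoke_vtx_upd_nth_other:
  "j < m + 2 \<Longrightarrow> j \<noteq> i \<Longrightarrow> j \<noteq> i + 1 \<Longrightarrow> yoke_vtx n m (f(i := x)) ! j = yoke_vtx n m f ! j"
  by (auto simp: yoke_vtx_nth)

lemma yoke_adj_yoke_vtx_upd:
  assumes "n \<ge> 1" "height_fun m f" "height_fun m (f(i := f i + d))" "i \<le> m" "d \<in> {1, -1}"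
    and "yoke_vtx n m f \<noteq> yoke_vtx n m (f(i := f i + d))"
  shows "yoke_adj n m (yoke_vtx n m f) (yoke_vtx n m (f(i := f i + d)))"
  unfolding yoke_adj_def
  using assms yoke_vert_yoke_vtx yoke_vtx_upd_nth[OF \<open>i \<le> m\<close>, of n f d]
    yoke_vtx_upd_nth_other[of _ m i n f]
  by (intro conjI exI[of _ i]) auto

lemma yoke_ent_add_cancel:
  assumes "j = 0 \<or> j = m + 1 \<Longrightarrow> 0 \<le> x \<and> x < int n \<and> 0 \<le> y \<and> y < int n"
    and "yoke_ent n m j (x + d) = yoke_ent n m j (y + d)"
  shows "x = y"
proof (cases "j = 0 \<or> j = m + 1")
  case True
  then have "((x + d) mod int n - d) mod int n = ((y + d) mod int n - d) mod int n"
    using assms(2) by (simp add: yoke_ent_def)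
  then have "x mod int n = y mod int n"
    by (simp add: mod_diff_left_eq)
  then show ?thesis
    using True assms(1) by simp
qed (use assms(2) in \<open>simp add: yoke_ent_def\<close>)

lemma yoke_vtx_bucket_bounds:
  "0 < n \<Longrightarrow> j = 0 \<or> j = m + 1 \<Longrightarrow> 0 \<le> yoke_vtx n m f ! j \<and> yoke_vtx n m f ! j < int n"
  by (auto simp: yoke_vtx_nth)

lemma yoke_vtx_upd_eqI:
  assumes w: "yoke_vert n m w" and i: "i \<le> m"
    and same: "\<forall>j<m + 2. j \<noteq> i \<and> j \<noteq> i + 1 \<longrightarrow> yoke_vtx n m f ! j = w ! j"
    and at_i: "yoke_vtx n m f ! i = yoke_ent n m i (w ! i + d)"
    and at_Suc_i: "yoke_vtx n m f ! (i + 1) = yoke_ent n m (i + 1) (w ! (i + 1) - d)"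
  shows "w = yoke_vtx n m (f(i := f i + d))"
proof (rule nth_equalityI)
  let ?g = "f(i := f i + d)"
  have bucket_w: "0 \<le> w ! j \<and> w ! j < int n" if "j = 0 \<or> j = m + 1" for j
    using w that by (auto simp: yoke_vert_def)
  then have bucket_g: "0 \<le> yoke_vtx n m ?g ! j \<and> yoke_vtx n m ?g ! j < int n"
    if "j = 0 \<or> j = m + 1" for j
    using that yoke_vtx_bucket_bounds by fastforce
  show "length w = length (yoke_vtx n m ?g)"
    using w by (simp add: yoke_vert_def)
  show "w ! j = yoke_vtx n m ?g ! j" if "j < length w" for j
  proof -
    consider "j = i" | "j = i + 1" | "j \<noteq> i" "j \<noteq> i + 1"
      by blast
    then show ?thesis
    proof cases
      case 1
      have "yoke_ent n m j (w ! j + d) = yoke_ent n m j (yoke_vtx n m ?g ! j + d)"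
        using at_i yoke_vtx_upd_nth(1)[OF i, of n f d] 1 by simp
      then show ?thesis
        by (rule yoke_ent_add_cancel[rotated]) (use bucket_w bucket_g in blast)
    next
      case 2
      have "yoke_ent n m j (w ! j + - d) = yoke_ent n m j (yoke_vtx n m ?g ! j + - d)"
        using at_Suc_i yoke_vtx_upd_nth(2)[OF i, of n f d] 2 by simp
      then show ?thesis
        by (rule yoke_ent_add_cancel[rotated]) (use bucket_w bucket_g in blast)
    next
      case 3
      moreover have "j < m + 2"
        using w that by (simp add: yoke_vert_def)
      ultimately show ?thesis
        using same yoke_vtx_upd_nth_other by metis
    qed
  qed
qed

lemma yoke_adj_yoke_vtxE:
  assumes "yoke_adj n m (yoke_vtx n m f) w"
  obtains i d where "i \<le> m" "d \<in> {1, -1}" "w = yoke_vtx n m (f(i := f i + d))"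
proof -
  from assms obtain i where "i \<le> m" "yoke_vert n m w"
    and "\<forall>j<m + 2. j \<noteq> i \<and> j \<noteq> i + 1 \<longrightarrow> yoke_vtx n m f ! j = w ! j"
    and "\<exists>d\<in>{1, -1}. yoke_vtx n m f ! i = yoke_ent n m i (w ! i + d) \<and>
                  yoke_vtx n m f ! (i + 1) = yoke_ent n m (i + 1) (w ! (i + 1) - d)"
    unfolding yoke_adj_def by auto
  then show thesis
    using that yoke_vtx_upd_eqI by metis
qed

lemma height_weight_upd_le:
  assumes "i \<le> m" "\<bar>d\<bar> \<le> 1"
  shows "height_weight m (f(i := f i + d)) \<le> height_weight m f + 1"
proof -
  have "height_weight m (f(i := f i + d)) \<le> (\<Sum>j\<le>m. \<bar>f j\<bar> + (if j = i then 1 else 0))"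
    unfolding height_weight_def by (rule sum_mono) (use assms in auto)
  also have "\<dots> = height_weight m f + 1"
    using assms by (simp add: sum.distrib height_weight_def)
  finally show ?thesis .
qed

lemma height_weight_upd_eq:
  assumes "i \<le> m" "\<bar>x\<bar> = \<bar>f i\<bar> - 1"
  shows "height_weight m (f(i := x)) = height_weight m f - 1"
proof -
  have "height_weight m (f(i := x)) = (\<Sum>j\<le>m. \<bar>f j\<bar> - (if j = i then 1 else 0))"
    unfolding height_weight_def by (rule sum.cong) (use assms in auto)
  also have "\<dots> = height_weight m f - 1"
    using assms by (simp add: sum_subtractf height_weight_def)
  finally show ?thesis .
qed

section \<open>Distance from the zero vertex\<close>

lemma height_weight_le_walk_length:
  assumes "(yoke_adj n m ^^ k) (yoke_zero m) v"
  shows "\<exists>f. v = yoke_vtx n m f \<and> height_weight m f \<le> int k"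
  using assms
proof (induction k arbitrary: v)
  case 0
  then show ?case
    using yoke_zero_eq_yoke_vtx[of m n] by (intro exI[of _ "\<lambda>_. 0"]) (simp add: height_weight_def)
next
  case (Suc k)
  then obtain u where "(yoke_adj n m ^^ k) (yoke_zero m) u" and "yoke_adj n m u v"
    by (meson relpowp_Suc_E)
  moreover obtain f where "u = yoke_vtx n m f" "height_weight m f \<le> int k"
    using Suc.IH calculation(1) by blast
  ultimately obtain i d where "i \<le> m" "d \<in> {1, -1}" "v = yoke_vtx n m (f(i := f i + d))"
    by (metis yoke_adj_yoke_vtxE)
  moreover have "height_weight m (f(i := f i + d)) \<le> height_weight m f + 1"
    using calculation by (intro height_weight_upd_le) auto
  moreover have "height_weight m (f(i := f i + d)) \<le> int (Suc k)"
    using calculation \<open>height_weight m f \<le> int k\<close> by simp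
  ultimately show ?case
    by blast
qed

lemma height_fun_top_plateau:
  "height_fun m f \<Longrightarrow> \<exists>i\<le>m. (\<forall>j\<le>i. f j = f 0) \<and> (i < m \<longrightarrow> f (Suc i) = f 0 - 1)"
proof (induction m)
  case (Suc m)
  then have "height_fun m f"
    by (auto simp: height_fun_def)
  then obtain i where i: "i \<le> m" and flat: "\<And>j. j \<le> i \<Longrightarrow> f j = f 0"
    and drop: "i < m \<longrightarrow> f (Suc i) = f 0 - 1"
    using Suc.IH by blast
  have step: "f m - f (Suc m) \<in> {0, 1}"
    using Suc.prems by (simp add: height_fun_def)
  show ?case
  proof (cases "i < m \<or> f (Suc m) \<noteq> f m")
    case True
    have "i < Suc m \<longrightarrow> f (Suc i) = f 0 - 1"
    proof (cases "i = m")
      case True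
      then show ?thesis
        using flat[of m] step \<open>i < m \<or> f (Suc m) \<noteq> f m\<close> by auto
    qed (use i drop in auto)
    moreover have "i \<le> Suc m"
      using i by simp
    ultimately show ?thesis
      using flat by blast
  next
    case False
    then have "i = m" "f (Suc m) = f m"
      using i by auto
    have "f j = f 0" if "j \<le> Suc m" for j
    proof (cases "j = Suc m")
      case True
      then show ?thesis
        using flat[of m] \<open>i = m\<close> \<open>f (Suc m) = f m\<close> by simp
    next
      case False
      then show ?thesis
        using that \<open>i = m\<close> by (intro flat) simp
    qed
    then show ?thesis
      by blast
  qed
qed simp

lemma height_fun_bottom_plateau:
  "height_fun m f \<Longrightarrow>
     \<exists>i\<le>m. (\<forall>j. i \<le> j \<and> j \<le> m \<longrightarrow> f j = f m) \<and> (0 < i \<longrightarrow> f (i - 1) = f m + 1)"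
proof (induction m)
  case (Suc m)
  then have "height_fun m f"
    by (auto simp: height_fun_def)
  then obtain i where i: "i \<le> m" and flat: "\<And>j. i \<le> j \<Longrightarrow> j \<le> m \<Longrightarrow> f j = f m"
    and drop: "0 < i \<longrightarrow> f (i - 1) = f m + 1"
    using Suc.IH by blast
  have "f m - f (Suc m) \<in> {0, 1}"
    using Suc.prems by (simp add: height_fun_def)
  then consider "f (Suc m) = f m" | "f (Suc m) = f m - 1"
    by force
  then show ?case
  proof cases
    case 1
    have "f j = f (Suc m)" if "i \<le> j" "j \<le> Suc m" for j
    proof (cases "j = Suc m")
      case False
      then show ?thesis
        using flat[of j] that 1 by simp
    qed simp
    moreover have "i \<le> Suc m" "0 < i \<longrightarrow> f (i - 1) = f (Suc m) + 1"
      using i drop 1 by simp_all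
    ultimately show ?thesis
      by blast
  next
    case 2
    then show ?thesis
      by (intro exI[of _ "Suc m"]) (auto dest: le_antisym)
  qed
qed simp

lemma height_fun_upd:
  assumes "height_fun m f"
    and "0 < i \<Longrightarrow> f (i - 1) - x \<in> {0, 1}" and "i < m \<Longrightarrow> x - f (Suc i) \<in> {0, 1}"
  shows "height_fun m (f(i := x))"
  unfolding height_fun_def
proof (intro allI impI)
  fix j assume "j < m"
  consider "j = i" | "j = i - 1" "0 < i" | "j \<noteq> i" "Suc j \<noteq> i"
    by linarith
  then show "(f(i := x)) j - (f(i := x)) (Suc j) \<in> {0, 1}"
  proof cases
    case 3
    then show ?thesis
      using assms(1) \<open>j < m\<close> by (simp add: height_fun_def)
  qed (use assms(2,3) \<open>j < m\<close> in simp_all)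
qed

lemma height_fun_lower_top:
  assumes f: "height_fun m f"
  obtains i where "i \<le> m" "f i = f 0" "height_fun m (f(i := f 0 - 1))"
proof -
  obtain i where i: "i \<le> m" and flat: "\<And>j. j \<le> i \<Longrightarrow> f j = f 0"
    and drop: "i < m \<longrightarrow> f (Suc i) = f 0 - 1"
    using height_fun_top_plateau[OF f] by blast
  have "f i = f 0" "0 < i \<Longrightarrow> f (i - 1) = f 0"
    using flat[of i] flat[of "i - 1"] by simp_all
  moreover from this have "height_fun m (f(i := f 0 - 1))"
    using drop by (intro height_fun_upd[OF f]) auto
  ultimately show thesis
    using i that by blast
qed

lemma height_fun_raise_bottom:
  assumes f: "height_fun m f"
  obtains i where "i \<le> m" "f i = f m" "height_fun m (f(i := f m + 1))"
proof -
  obtain i where i: "i \<le> m" and flat: "\<And>j. i \<le> j \<Longrightarrow> j \<le> m \<Longrightarrow> f j = f m"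
    and drop: "0 < i \<longrightarrow> f (i - 1) = f m + 1"
    using height_fun_bottom_plateau[OF f] by blast
  have "f i = f m" "i < m \<Longrightarrow> f (Suc i) = f m"
    using flat[of i] flat[of "Suc i"] i by simp_all
  moreover from this have "height_fun m (f(i := f m + 1))"
    using drop by (intro height_fun_upd[OF f]) auto
  ultimately show thesis
    using i that by blast
qed

lemma height_fun_weight_descent:
  assumes f: "height_fun m f" and "height_weight m f > 0"
  obtains i d where "i \<le> m" "d \<in> {1, -1}" "height_fun m (f(i := f i + d))"
    "height_weight m (f(i := f i + d)) = height_weight m f - 1"
proof -
  have "f 0 > 0 \<or> f m < 0"
  proof (rule ccontr)
    assume "\<not> (f 0 > 0 \<or> f m < 0)"
    then have "f j = 0" if "j \<le> m" for j
      using height_fun_antimono[OF f, of 0 j] height_fun_antimono[OF f, of j m] that by simp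
    then have "height_weight m f = 0"
      by (simp add: height_weight_def)
    with assms show False
      by simp
  qed
  then show thesis
  proof
    assume "f 0 > 0"
    obtain i where "i \<le> m" "f i = f 0" "height_fun m (f(i := f 0 - 1))"
      using height_fun_lower_top[OF f] by blast
    moreover from this have "height_weight m (f(i := f 0 - 1)) = height_weight m f - 1"
      using \<open>f 0 > 0\<close> by (intro height_weight_upd_eq) simp_all
    ultimately show thesis
      by (intro that[of i "-1"]) simp_all
  next
    assume "f m < 0"
    obtain i where "i \<le> m" "f i = f m" "height_fun m (f(i := f m + 1))"
      using height_fun_raise_bottom[OF f] by blast
    moreover from this have "height_weight m (f(i := f m + 1)) = height_weight m f - 1"
      using \<open>f m < 0\<close> by (intro height_weight_upd_eq) simp_all
    ultimately show thesis
      by (intro that[of i 1]) simp_all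
  qed
qed

lemma yoke_vtx_descent_step:
  assumes "n \<ge> 1" "height_fun m f" "height_weight m f > 0"
  obtains g where "height_fun m g" "height_weight m g = height_weight m f - 1"
    "yoke_vtx n m g = yoke_vtx n m f \<or> yoke_adj n m (yoke_vtx n m g) (yoke_vtx n m f)"
proof -
  obtain i d where i: "i \<le> m" and d: "d \<in> {1, -1}"
    and g: "height_fun m (f(i := f i + d))"
    and weight: "height_weight m (f(i := f i + d)) = height_weight m f - 1"
    using height_fun_weight_descent[OF assms(2,3)] by blast
  let ?g = "f(i := f i + d)"
  have f: "?g(i := ?g i + - d) = f"
    by simp
  have "yoke_vtx n m ?g = yoke_vtx n m f \<or> yoke_adj n m (yoke_vtx n m ?g) (yoke_vtx n m f)"
    using yoke_adj_yoke_vtx_upd[OF assms(1) g, of i "- d"] assms(2) i d unfolding f by auto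
  with g weight show thesis
    by (rule that)
qed

lemma walk_to_yoke_vtx:
  assumes "n \<ge> 1"
  shows "height_fun m f \<Longrightarrow>
    \<exists>k. int k \<le> height_weight m f \<and> (yoke_adj n m ^^ k) (yoke_zero m) (yoke_vtx n m f)"
proof (induction "nat (height_weight m f)" arbitrary: f)
  case 0
  moreover have "0 \<le> height_weight m f"
    by (simp add: height_weight_def sum_nonneg)
  ultimately have "height_weight m f = 0"
    by simp
  then have "f j = 0" if "j \<le> m" for j
    using that by (simp add: height_weight_def sum_nonneg_eq_0_iff)
  then have "yoke_vtx n m f = yoke_zero m"
    unfolding yoke_zero_eq_yoke_vtx[of m n] by (rule yoke_vtx_cong)
  then show ?case
    using \<open>height_weight m f = 0\<close> by (intro exI[of _ 0]) simp
next
  case (Suc w)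
  then have "height_weight m f > 0"
    by linarith
  then obtain g where g: "height_fun m g" and weight: "height_weight m g = height_weight m f - 1"
    and step: "yoke_vtx n m g = yoke_vtx n m f \<or> yoke_adj n m (yoke_vtx n m g) (yoke_vtx n m f)"
    using yoke_vtx_descent_step[OF assms Suc.prems] by blast
  have "w = nat (height_weight m g)"
    using Suc.hyps(2) weight by simp
  then obtain k where k: "int k \<le> height_weight m g" "(yoke_adj n m ^^ k) (yoke_zero m) (yoke_vtx n m g)"
    using Suc.hyps(1) g by blast
  from step show ?case
  proof
    assume "yoke_vtx n m g = yoke_vtx n m f"
    then show ?case
      using k weight by (intro exI[of _ k]) simp
  next
    assume "yoke_adj n m (yoke_vtx n m g) (yoke_vtx n m f)"
    with k(2) have "(yoke_adj n m ^^ Suc k) (yoke_zero m) (yoke_vtx n m f)"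
      by (rule relpowp_Suc_I)
    with k(1) weight show ?case
      by (intro exI[of _ "Suc k"]) simp
  qed
qed

definition staircase :: "nat \<Rightarrow> (nat \<Rightarrow> int) \<Rightarrow> bool" where
  "staircase m p \<longleftrightarrow> p 0 = 0 \<and> (\<forall>j<m. p (Suc j) - p j \<in> {0, 1})"

definition abs_dev :: "nat \<Rightarrow> (nat \<Rightarrow> int) \<Rightarrow> int \<Rightarrow> int" where
  "abs_dev m p c = (\<Sum>j\<le>m. \<bar>c - p j\<bar>)"

lemma height_fun_staircase: "staircase m p \<Longrightarrow> height_fun m (\<lambda>j. r - p j)"
  by (auto simp: staircase_def height_fun_def)

lemma height_weight_eq_abs_dev: "height_weight m (\<lambda>j. c - p j) = abs_dev m p c"
  by (simp add: height_weight_def abs_dev_def)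

lemma yoke_vert_obtains_staircase:
  assumes "yoke_vert n m v"
  obtains p r where "staircase m p" "v = yoke_vtx n m (\<lambda>j. r - p j)"
proof -
  obtain f where f: "height_fun m f" "v = yoke_vtx n m f"
    using yoke_vert_obtains_height_fun[OF assms] by blast
  then have "staircase m (\<lambda>j. f 0 - f j)"
    by (auto simp: staircase_def height_fun_def)
  moreover have "v = yoke_vtx n m (\<lambda>j. f 0 - (f 0 - f j))"
    using f(2) by simp
  ultimately show thesis
    by (rule that)
qed

lemma yoke_dist_le_abs_dev:
  assumes "n \<ge> 1" "staircase m p"
  shows "int (yoke_dist n m (yoke_zero m) (yoke_vtx n m (\<lambda>j. r - p j)))
    \<le> abs_dev m p (r + t * int n)"
proof -
  let ?f = "\<lambda>j. r + t * int n - p j"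
  obtain k where k: "int k \<le> height_weight m ?f" "(yoke_adj n m ^^ k) (yoke_zero m) (yoke_vtx n m ?f)"
    using walk_to_yoke_vtx[OF assms(1) height_fun_staircase[OF assms(2)]] by blast
  have "yoke_vtx n m ?f = yoke_vtx n m (\<lambda>j. r - p j)"
    using yoke_vtx_shift[of n m "\<lambda>j. r - p j" t] by (simp add: algebra_simps)
  with k(2) have "yoke_dist n m (yoke_zero m) (yoke_vtx n m (\<lambda>j. r - p j)) \<le> k"
    unfolding yoke_dist_def by (intro Least_le) simp
  with k(1) show ?thesis
    unfolding height_weight_eq_abs_dev by linarith
qed

lemma abs_dev_le_yoke_dist:
  assumes "n \<ge> 1" "staircase m p"
  obtains t where "abs_dev m p (r + t * int n)
    \<le> int (yoke_dist n m (yoke_zero m) (yoke_vtx n m (\<lambda>j. r - p j)))"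
proof -
  let ?f = "\<lambda>j. r - p j"
  let ?d = "yoke_dist n m (yoke_zero m) (yoke_vtx n m ?f)"
  obtain k where "(yoke_adj n m ^^ k) (yoke_zero m) (yoke_vtx n m ?f)"
    using walk_to_yoke_vtx[OF assms(1) height_fun_staircase[OF assms(2)]] by blast
  then have "(yoke_adj n m ^^ ?d) (yoke_zero m) (yoke_vtx n m ?f)"
    unfolding yoke_dist_def by (rule LeastI)
  then obtain g where g: "yoke_vtx n m ?f = yoke_vtx n m g" "height_weight m g \<le> int ?d"
    using height_weight_le_walk_length by blast
  obtain t where shift: "\<And>j. j \<le> m \<Longrightarrow> r - p j = g j + t * int n"
    using yoke_vtx_eq_imp_shift[OF g(1)] by blast
  have "r + (- t) * int n - p j = g j" if "j \<le> m" for j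
    using shift[OF that] by linarith
  then have "abs_dev m p (r + (- t) * int n) = height_weight m g"
    unfolding abs_dev_def height_weight_def by (intro sum.cong) auto
  with g(2) show thesis
    by (intro that[of "- t"]) simp
qed

lemma yoke_ecc_eqI:
  assumes n: "n \<ge> 1"
    and upper: "\<And>p r. staircase m p \<Longrightarrow> \<exists>t. abs_dev m p (r + t * int n) \<le> int D"
    and lower: "staircase m p" "\<And>t. int D \<le> abs_dev m p (r + t * int n)"
  shows "yoke_ecc n m (yoke_zero m) = D"
proof -
  let ?dist = "yoke_dist n m (yoke_zero m)"
  have le: "?dist v \<le> D" if v: "yoke_vert n m v" for v
  proof -
    obtain p r where p: "staircase m p" and v: "v = yoke_vtx n m (\<lambda>j. r - p j)"
      using yoke_vert_obtains_staircase[OF v] by blast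
    obtain t where "abs_dev m p (r + t * int n) \<le> int D"
      using upper[OF p] by blast
    then show ?thesis
      using yoke_dist_le_abs_dev[OF n p, of r t] unfolding v by linarith
  qed
  let ?v = "yoke_vtx n m (\<lambda>j. r - p j)"
  obtain t where "abs_dev m p (r + t * int n) \<le> int (?dist ?v)"
    using abs_dev_le_yoke_dist[OF n lower(1)] by blast
  with lower(2)[of t] have "D \<le> ?dist ?v"
    by linarith
  moreover have vert: "yoke_vert n m ?v"
    by (rule yoke_vert_yoke_vtx[OF n height_fun_staircase[OF lower(1)]])
  ultimately have "?dist ?v = D"
    using le by (simp add: le_antisym)
  moreover have "finite {?dist v | v. yoke_vert n m v}"
    by (rule finite_subset[of _ "{..D}"]) (use le in auto)
  ultimately show ?thesis
    unfolding yoke_ecc_def using le vert by (intro Max_eqI) auto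
qed

section \<open>Sums of absolute deviations\<close>

lemma abs_dev_Suc [simp]: "abs_dev (Suc m) p c = abs_dev m p c + \<bar>c - p (Suc m)\<bar>"
  by (simp add: abs_dev_def)

lemma abs_dev_lipschitz: "abs_dev m p x \<le> abs_dev m p y + (int m + 1) * \<bar>x - y\<bar>"
proof -
  have "abs_dev m p x \<le> (\<Sum>j\<le>m. \<bar>y - p j\<bar> + \<bar>x - y\<bar>)"
    unfolding abs_dev_def by (rule sum_mono) linarith
  also have "\<dots> = abs_dev m p y + (int m + 1) * \<bar>x - y\<bar>"
    by (simp add: sum.distrib abs_dev_def)
  finally show ?thesis .
qed

lemma abs_dev_int_nonpos: "c \<le> 0 \<Longrightarrow> 2 * abs_dev m int c = (int m + 1) * (int m - 2 * c)"
  by (induction m) (simp_all add: abs_dev_def algebra_simps)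

lemma abs_dev_int_ge: "int m \<le> c \<Longrightarrow> 2 * abs_dev m int c = (int m + 1) * (2 * c - int m)"
  by (induction m) (simp_all add: abs_dev_def algebra_simps)

lemma abs_dev_int_between:
  "-1 \<le> c \<Longrightarrow> c \<le> int m + 1 \<Longrightarrow>
    2 * abs_dev m int c = c * (c + 1) + (int m - c) * (int m - c + 1)"
proof (induction m)
  case 0
  then have "c = -1 \<or> c = 0 \<or> c = 1"
    by auto
  then show ?case
    by (auto simp: abs_dev_def)
next
  case (Suc m)
  show ?case
  proof (cases "c \<le> int m + 1")
    case True
    then show ?thesis
      using Suc by (simp add: algebra_simps)
  next
    case False
    then have "c = int (Suc m) + 1"
      using Suc.prems by simp
    then show ?thesis
      using abs_dev_int_ge[of "Suc m" c] by (simp add: algebra_simps)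
  qed
qed

lemma abs_dev_int_le_window_end:
  assumes "0 \<le> a" "a \<le> k" "k \<le> b" "a + b = int m"
  shows "abs_dev m int k \<le> abs_dev m int a"
proof -
  have "2 * abs_dev m int k = k * (k + 1) + (a + b - k) * (a + b - k + 1)"
    "2 * abs_dev m int a = a * (a + 1) + b * (b + 1)"
    using abs_dev_int_between[of k m] abs_dev_int_between[of a m] assms(1-3)
    unfolding assms(4)[symmetric] by simp_all
  then have "2 * abs_dev m int a - 2 * abs_dev m int k = 2 * ((k - a) * (b - k))"
    by (simp add: algebra_simps)
  moreover have "(k - a) * (b - k) \<ge> 0"
    using assms by simp
  ultimately show ?thesis
    by linarith
qed

text \<open>The constant term is abs_dev m int (a - 1) + abs_dev m int (b + 1); beyond these two
  points abs_dev m int has slope at most m + 1.\<close>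
lemma abs_dev_int_outside_window:
  assumes "0 \<le> a" "a \<le> b" "a + b = int m" "k1 < a" "b < k2"
  shows "abs_dev m int k1 + abs_dev m int k2
    \<le> 2 * abs_dev m int a + 2 * (b - a + 1) + (int m + 1) * (k2 - k1 - (b - a + 2))"
proof -
  have "2 * abs_dev m int (a - 1) = (a - 1) * a + (b + 1) * (b + 2)"
    "2 * abs_dev m int (b + 1) = (a - 1) * a + (b + 1) * (b + 2)"
    "2 * abs_dev m int a = a * (a + 1) + b * (b + 1)"
    using abs_dev_int_between[of "a - 1" m] abs_dev_int_between[of "b + 1" m]
      abs_dev_int_between[of a m] assms(1,2)
    unfolding assms(3)[symmetric] by (simp_all add: algebra_simps)
  then have "abs_dev m int (a - 1) + abs_dev m int (b + 1) = 2 * abs_dev m int a + 2 * (b - a + 1)"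
    by (simp add: algebra_simps)
  moreover have "abs_dev m int k1 \<le> abs_dev m int (a - 1) + (int m + 1) * (a - 1 - k1)"
    "abs_dev m int k2 \<le> abs_dev m int (b + 1) + (int m + 1) * (k2 - b - 1)"
    using abs_dev_lipschitz[of m int k1 "a - 1"] abs_dev_lipschitz[of m int k2 "b + 1"] assms(4,5)
    by (simp_all add: diff_diff_eq)
  moreover have "(int m + 1) * (a - 1 - k1) + (int m + 1) * (k2 - b - 1)
      = (int m + 1) * (k2 - k1 - (b - a + 2))"
    by (simp add: algebra_simps)
  ultimately show ?thesis
    by linarith
qed

section \<open>Upper bound\<close>

definition stair_ext :: "nat \<Rightarrow> (nat \<Rightarrow> int) \<Rightarrow> int \<Rightarrow> int" where
  "stair_ext m p k = (if k < 0 then k else if k \<le> int m then p (nat k) else k - int m + p m)"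

lemma stair_ext_of_nat: "j \<le> m \<Longrightarrow> stair_ext m p (int j) = p j"
  by (simp add: stair_ext_def)

lemma stair_ext_step:
  assumes "staircase m p"
  shows "stair_ext m p (k + 1) - stair_ext m p k \<in> {0, 1}"
proof -
  consider "k < -1" | "k = -1" | "0 \<le> k \<and> k < int m" | "k = int m" | "k > int m"
    by linarith
  then show ?thesis
  proof cases
    case 3
    then have "nat (k + 1) = Suc (nat k)" "nat k < m"
      by auto
    then show ?thesis
      using 3 assms by (simp add: stair_ext_def staircase_def)
  qed (use assms in \<open>auto simp: stair_ext_def staircase_def\<close>)
qed

lemma stair_ext_mono:
  assumes "staircase m p" "a \<le> b"
  shows "0 \<le> stair_ext m p b - stair_ext m p a \<and> stair_ext m p b - stair_ext m p a \<le> b - a"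
proof -
  obtain d where b: "b = a + int d"
    using assms(2) by (metis zle_iff_zadd)
  have "0 \<le> stair_ext m p (a + int d) - stair_ext m p a \<and>
        stair_ext m p (a + int d) - stair_ext m p a \<le> int d"
  proof (induction d)
    case (Suc d)
    have "a + int (Suc d) = (a + int d) + 1"
      by simp
    then have "stair_ext m p (a + int (Suc d)) - stair_ext m p (a + int d) \<in> {0, 1}"
      using stair_ext_step[OF assms(1)] by presburger
    then show ?case
      using Suc by auto
  qed simp
  then show ?thesis
    using b by simp
qed

lemma stair_ext_dist: "staircase m p \<Longrightarrow> \<bar>stair_ext m p x - stair_ext m p y\<bar> \<le> \<bar>x - y\<bar>"
  using stair_ext_mono[of m p x y] stair_ext_mono[of m p y x] by (cases "x \<le> y") auto

lemma stair_ext_ivt: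
  assumes "staircase m p" "a \<le> b" "stair_ext m p a \<le> y" "y \<le> stair_ext m p b"
  obtains k where "a \<le> k" "k \<le> b" "stair_ext m p k = y"
proof -
  obtain d where b: "b = a + int d"
    using assms(2) by (metis zle_iff_zadd)
  have "y \<le> stair_ext m p (a + int d) \<Longrightarrow> \<exists>k. a \<le> k \<and> k \<le> a + int d \<and> stair_ext m p k = y"
  proof (induction d)
    case 0
    then show ?case
      using assms(3) by (intro exI[of _ a]) simp
  next
    case (Suc d)
    show ?case
    proof (cases "y \<le> stair_ext m p (a + int d)")
      case True
      then show ?thesis
        using Suc.IH by force
    next
      case False
      have "a + int (Suc d) = (a + int d) + 1"
        by simp
      then have "stair_ext m p (a + int (Suc d)) - stair_ext m p (a + int d) \<in> {0, 1}"
        using stair_ext_step[OF assms(1)] by presburger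
      then have "stair_ext m p (a + int (Suc d)) = y"
        using False Suc.prems by auto
      then show ?thesis
        by (intro exI[of _ "a + int (Suc d)"]) simp
    qed
  qed
  then show thesis
    using that b assms(4) by blast
qed

lemma abs_dev_stair_ext_le:
  assumes "staircase m p"
  shows "abs_dev m p (stair_ext m p k) \<le> abs_dev m int k"
  unfolding abs_dev_def
proof (rule sum_mono)
  fix j assume "j \<in> {..m}"
  then show "\<bar>stair_ext m p k - p j\<bar> \<le> \<bar>k - int j\<bar>"
    using stair_ext_dist[OF assms, of k "int j"] by (simp add: stair_ext_of_nat)
qed

lemma abs_dev_stair_ext_pair:
  assumes p: "staircase m p" and k: "k1 \<le> k2"
  shows "abs_dev m p (stair_ext m p k1) + abs_dev m p (stair_ext m p k2) \<le>
         abs_dev m int k1 + abs_dev m int k2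
           - (int m + 1) * ((k2 - k1) - (stair_ext m p k2 - stair_ext m p k1))"
proof -
  let ?L = "stair_ext m p"
  let ?z = "(k2 - k1) - (?L k2 - ?L k1)"
  have mono: "0 \<le> ?L y - ?L x \<and> ?L y - ?L x \<le> y - x" if "x \<le> y" for x y
    using stair_ext_mono[OF p that] .
  have pointwise: "\<bar>?L k1 - p j\<bar> + \<bar>?L k2 - p j\<bar> \<le> \<bar>k1 - int j\<bar> + \<bar>k2 - int j\<bar> - ?z"
    if "j \<le> m" for j
  proof -
    have pj: "p j = ?L (int j)"
      using that by (simp add: stair_ext_of_nat)
    consider "int j \<le> k1" | "k1 \<le> int j \<and> int j \<le> k2" | "k2 \<le> int j"
      by linarith
    then show ?thesis
      using mono[of k1 k2] mono[of "int j" k1] mono[of k1 "int j"] mono[of "int j" k2]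
        mono[of k2 "int j"] k unfolding pj by cases (auto simp: abs_if)
  qed
  have "abs_dev m p (?L k1) + abs_dev m p (?L k2) = (\<Sum>j\<le>m. \<bar>?L k1 - p j\<bar> + \<bar>?L k2 - p j\<bar>)"
    by (simp add: abs_dev_def sum.distrib)
  also have "\<dots> \<le> (\<Sum>j\<le>m. \<bar>k1 - int j\<bar> + \<bar>k2 - int j\<bar> - ?z)"
    by (rule sum_mono) (use pointwise in auto)
  also have "\<dots> = abs_dev m int k1 + abs_dev m int k2 - (int m + 1) * ?z"
    by (simp add: sum.distrib sum_subtractf abs_dev_def)
  finally show ?thesis .
qed

lemma int_greatest_below:
  fixes P :: "int \<Rightarrow> bool"
  assumes "P k0" "k0 < a"
  obtains k where "P k" "k < a" "\<And>k'. k < k' \<Longrightarrow> k' < a \<Longrightarrow> \<not> P k'"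
proof -
  define d where "d = (LEAST d::nat. P (a - 1 - int d))"
  have "P (a - 1 - int (nat (a - 1 - k0)))"
    using assms by simp
  then have Pd: "P (a - 1 - int d)"
    unfolding d_def by (rule LeastI)
  have "\<not> P k'" if "a - 1 - int d < k'" "k' < a" for k'
  proof
    assume "P k'"
    then have "d \<le> nat (a - 1 - k')"
      unfolding d_def by (intro Least_le) (use that in simp)
    with that show False
      by linarith
  qed
  with Pd show thesis
    by (intro that[of "a - 1 - int d"]) auto
qed

lemma int_least_above:
  fixes P :: "int \<Rightarrow> bool"
  assumes "P k0" "b < k0"
  obtains k where "P k" "b < k" "\<And>k'. b < k' \<Longrightarrow> k' < k \<Longrightarrow> \<not> P k'"
proof -
  obtain k where k: "P (- k)" "k < - b" and none: "\<And>k'. k < k' \<Longrightarrow> k' < - b \<Longrightarrow> \<not> P (- k')"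
    using int_greatest_below[of "\<lambda>k. P (- k)" "- k0" "- b"] assms by auto
  have "\<not> P k'" if "b < k'" "k' < - k" for k'
    using none[of "- k'"] that by simp
  with k show thesis
    by (intro that[of "- k"]) auto
qed

lemma abs_dev_residue_shift:
  assumes "c mod int n = r mod int n" "abs_dev m p c \<le> X"
  shows "\<exists>t. abs_dev m p (r + t * int n) \<le> X"
proof -
  have "int n dvd c - r"
    using assms(1) by (simp add: mod_eq_dvd_iff)
  then obtain t where "c - r = int n * t"
    by (rule dvdE)
  then have "r + t * int n = c"
    by (simp add: algebra_simps)
  with assms(2) show ?thesis
    by (intro exI[of _ t]) simp
qed

lemma stair_ext_residue_below:
  assumes "n \<ge> 1"
  shows "\<exists>k<a. stair_ext m p k mod int n = r mod int n"
proof -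
  define X where "X = \<bar>r\<bar> + \<bar>a\<bar> + 1"
  have "1 * X \<le> int n * X"
    using assms by (intro mult_right_mono) (auto simp: X_def)
  then have k: "r - X * int n < min a 0"
    using abs_ge_self[of r] abs_ge_minus_self[of a] unfolding X_def by (simp add: algebra_simps)
  then have "stair_ext m p (r - X * int n) = r - X * int n"
    by (simp add: stair_ext_def)
  moreover have "(r - X * int n) mod int n = r mod int n"
    using mod_mult_self1[of r "- X" "int n"] by simp
  ultimately show ?thesis
    using k by (intro exI[of _ "r - X * int n"]) simp
qed

lemma stair_ext_residue_above:
  assumes "n \<ge> 1"
  shows "\<exists>k>b. stair_ext m p k mod int n = r mod int n"
proof -
  define X where "X = \<bar>r\<bar> + \<bar>p m\<bar> + \<bar>b\<bar> + 1"
  define k where "k = r + int m - p m + X * int n"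
  have "X \<le> X * int n"
    using assms by (auto simp: X_def)
  then have "b < k" "int m < k"
    using abs_ge_self[of r] abs_ge_minus_self[of "p m"] abs_ge_self[of b]
    unfolding k_def X_def by linarith+
  moreover from this have "stair_ext m p k = r + X * int n"
    by (simp add: stair_ext_def k_def)
  ultimately show ?thesis
    by (intro exI[of _ k]) simp
qed

text \<open>The extension moves in unit steps, so it takes every value between two of its values.\<close>
lemma stair_ext_residue_gap:
  assumes n: "n \<ge> 1" and p: "staircase m p" and "k1 \<le> k2"
    and hit: "stair_ext m p k1 mod int n = r mod int n" "stair_ext m p k2 mod int n = r mod int n"
    and no_hit: "\<And>k. k1 < k \<Longrightarrow> k < k2 \<Longrightarrow> stair_ext m p k mod int n \<noteq> r mod int n"
  shows "stair_ext m p k2 - stair_ext m p k1 \<le> int n"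
proof (rule ccontr)
  let ?L = "stair_ext m p"
  assume far: "\<not> ?L k2 - ?L k1 \<le> int n"
  obtain k where k: "k1 \<le> k" "k \<le> k2" "?L k = ?L k1 + int n"
    using stair_ext_ivt[OF p \<open>k1 \<le> k2\<close>, of "?L k1 + int n"] far n by auto
  then have "k \<noteq> k1" "k \<noteq> k2"
    using far n by auto
  moreover have "?L k mod int n = r mod int n"
    using k(3) hit(1) by simp
  ultimately show False
    using no_hit k(1,2) by force
qed

text \<open>If no point of the window [alpha, beta] is mapped into the class of r, the nearest such
  points k1 < alpha and k2 > beta have values at most n apart, and then the pair bound makes one
  of them good.\<close>
lemma abs_dev_residue_upper_bound:
  assumes n: "n \<ge> 1" and p: "staircase m p" and "\<alpha> \<le> \<beta>"
    and window: "\<And>k. \<alpha> \<le> k \<Longrightarrow> k \<le> \<beta> \<Longrightarrow> abs_dev m int k \<le> D"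
    and outside: "\<And>k1 k2. k1 < \<alpha> \<Longrightarrow> \<beta> < k2 \<Longrightarrow>
       abs_dev m int k1 + abs_dev m int k2 - (int m + 1) * (k2 - k1 - int n) \<le> 2 * D + 1"
  shows "\<exists>t. abs_dev m p (r + t * int n) \<le> D"
proof -
  let ?L = "stair_ext m p"
  define hit where "hit k \<longleftrightarrow> ?L k mod int n = r mod int n" for k
  have good: "\<exists>t. abs_dev m p (r + t * int n) \<le> D" if "hit k" "abs_dev m p (?L k) \<le> D" for k
    using abs_dev_residue_shift that unfolding hit_def by blast
  show ?thesis
  proof (cases "\<exists>k. \<alpha> \<le> k \<and> k \<le> \<beta> \<and> hit k")
    case True
    then obtain k where "\<alpha> \<le> k" "k \<le> \<beta>" "hit k"
      by blast
    then show ?thesis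
      using abs_dev_stair_ext_le[OF p, of k] window by (intro good) force+
  next
    case False
    obtain k1 where k1: "hit k1" "k1 < \<alpha>" "\<And>k. k1 < k \<Longrightarrow> k < \<alpha> \<Longrightarrow> \<not> hit k"
      using stair_ext_residue_below[OF n] int_greatest_below[of hit] unfolding hit_def by metis
    obtain k2 where k2: "hit k2" "\<beta> < k2" "\<And>k. \<beta> < k \<Longrightarrow> k < k2 \<Longrightarrow> \<not> hit k"
      using stair_ext_residue_above[OF n] int_least_above[of hit] unfolding hit_def by metis
    have "k1 \<le> k2"
      using k1(2) k2(2) \<open>\<alpha> \<le> \<beta>\<close> by simp
    moreover have "\<not> hit k" if "k1 < k" "k < k2" for k
      using False k1(3) k2(3) that by (meson not_le)
    ultimately have "?L k2 - ?L k1 \<le> int n"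
      using stair_ext_residue_gap[OF n p] k1(1) k2(1) unfolding hit_def by blast
    then have "(int m + 1) * (k2 - k1 - int n) \<le> (int m + 1) * ((k2 - k1) - (?L k2 - ?L k1))"
      by (intro mult_left_mono) auto
    then have "abs_dev m p (?L k1) + abs_dev m p (?L k2) \<le> 2 * D + 1"
      using abs_dev_stair_ext_pair[OF p \<open>k1 \<le> k2\<close>] outside[OF k1(2) k2(2)] by linarith
    then have "abs_dev m p (?L k1) \<le> D \<or> abs_dev m p (?L k2) \<le> D"
      by linarith
    then show ?thesis
      using good k1(1) k2(1) by blast
  qed
qed

section \<open>Lower bound\<close>

lemma abs_dev_le_left:
  assumes "c \<le> c1" and below: "2 * card {j. j \<le> m \<and> p j < c1} \<le> m + 1"
  shows "abs_dev m p c1 \<le> abs_dev m p c"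
proof -
  let ?d = "\<bar>c - c1\<bar>"
  let ?k = "int (card {j. j \<le> m \<and> p j < c1})"
  have "(\<Sum>j\<le>m. of_bool (p j < c1) :: int) = ?k"
    by (simp add: Int_def)
  then have "(\<Sum>j\<le>m. 1 - 2 * of_bool (p j < c1) :: int) = int m + 1 - 2 * ?k"
    by (simp add: sum_subtractf flip: sum_distrib_left)
  then have "(\<Sum>j\<le>m. \<bar>c1 - p j\<bar> + ?d * (1 - 2 * of_bool (p j < c1)))
      = abs_dev m p c1 + ?d * (int m + 1 - 2 * ?k)"
    by (simp add: abs_dev_def sum.distrib flip: sum_distrib_left)
  moreover have "(\<Sum>j\<le>m. \<bar>c1 - p j\<bar> + ?d * (1 - 2 * of_bool (p j < c1))) \<le> abs_dev m p c"
    unfolding abs_dev_def by (rule sum_mono) (use assms(1) in auto)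
  moreover have "0 \<le> ?d * (int m + 1 - 2 * ?k)"
    using below by simp
  ultimately show ?thesis
    by linarith
qed

lemma abs_dev_uminus: "abs_dev m (\<lambda>j. - p j) (- c) = abs_dev m p c"
  by (simp add: abs_dev_def abs_minus_commute)

lemma abs_dev_le_right:
  assumes "c2 \<le> c" and above: "2 * card {j. j \<le> m \<and> c2 < p j} \<le> m + 1"
  shows "abs_dev m p c2 \<le> abs_dev m p c"
  using abs_dev_le_left[of "- c" "- c2" m "\<lambda>j. - p j"] assms by (simp add: abs_dev_uminus)

text \<open>If the median of p lies in [c, c + n], the values at c and c + n bound abs_dev m p
  from below on the whole residue class of c.\<close>
lemma abs_dev_residue_lower_bound:
  assumes "n \<ge> 1"
    and "2 * card {j. j \<le> m \<and> p j < c} \<le> m + 1"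
    and "2 * card {j. j \<le> m \<and> c + int n < p j} \<le> m + 1"
    and "T \<le> abs_dev m p c" "T \<le> abs_dev m p (c + int n)"
  shows "T \<le> abs_dev m p (c + t * int n)"
proof (cases "t \<le> 0")
  case True
  then have "t * int n \<le> 0"
    by (simp add: mult_nonpos_nonneg)
  then show ?thesis
    using abs_dev_le_left[OF _ assms(2), of "c + t * int n"] assms(4) by simp
next
  case False
  then have "1 * int n \<le> t * int n"
    by (intro mult_right_mono) auto
  then show ?thesis
    using abs_dev_le_right[OF _ assms(3), of "c + t * int n"] assms(5) by simp
qed

lemma card_int_less: "card {j. j \<le> m \<and> int j < c} \<le> nat c"
proof -
  have "{j. j \<le> m \<and> int j < c} \<subseteq> {..<nat c}"
    by auto
  then show ?thesis
    using card_mono[of "{..<nat c}"] by fastforce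
qed

lemma card_int_greater: "card {j. j \<le> m \<and> c < int j} \<le> nat (int m - c)"
proof -
  have "{j. j \<le> m \<and> c < int j} \<subseteq> {nat (c + 1)..m}"
    by auto
  then have "card {j. j \<le> m \<and> c < int j} \<le> m + 1 - nat (c + 1)"
    using card_mono[of "{nat (c + 1)..m}"] by fastforce
  then show ?thesis
    by linarith
qed

definition stair_flat :: "nat \<Rightarrow> nat \<Rightarrow> int" where
  "stair_flat i j = int j - of_bool (i \<le> j)"

lemma staircase_stair_flat: "1 \<le> i \<Longrightarrow> staircase m (stair_flat i)"
  by (auto simp: staircase_def stair_flat_def)

lemma abs_dev_stair_flat:
  "abs_dev (Suc q + k) (stair_flat (Suc q)) c = abs_dev (q + k) int c + \<bar>c - int q\<bar>"
proof (induction k)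
  case 0
  have "abs_dev q (stair_flat (Suc q)) c = abs_dev q int c"
    unfolding abs_dev_def by (rule sum.cong) (auto simp: stair_flat_def)
  then have "abs_dev (Suc q) (stair_flat (Suc q)) c = abs_dev q int c + \<bar>c - int q\<bar>"
    by (simp only: abs_dev_Suc) (simp add: stair_flat_def)
  then show ?case
    by simp
next
  case (Suc k)
  then show ?case
    by (simp add: stair_flat_def)
qed

lemma card_stair_flat_less:
  assumes "c \<le> int i - 1"
  shows "card {j. j \<le> m \<and> stair_flat i j < c} \<le> nat c"
proof -
  have "{j. j \<le> m \<and> stair_flat i j < c} \<subseteq> {j. j \<le> m \<and> int j < c}"
    using assms by (auto simp: stair_flat_def)
  then have "card {j. j \<le> m \<and> stair_flat i j < c} \<le> card {j. j \<le> m \<and> int j < c}"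
    by (rule card_mono[rotated]) simp
  then show ?thesis
    using card_int_less[of m c] by linarith
qed

lemma card_stair_flat_greater:
  assumes "int i - 1 \<le> c"
  shows "card {j. j \<le> m \<and> c < stair_flat i j} \<le> nat (int m - c - 1)"
proof -
  have "{j. j \<le> m \<and> c < stair_flat i j} \<subseteq> {j. j \<le> m \<and> c + 1 < int j}"
    using assms by (auto simp: stair_flat_def)
  then have "card {j. j \<le> m \<and> c < stair_flat i j} \<le> card {j. j \<le> m \<and> c + 1 < int j}"
    by (rule card_mono[rotated]) simp
  then show ?thesis
    using card_int_greater[of m "c + 1"] by linarith
qed

section \<open>The case m \<le> n\<close>

lemma int_half_product_bounds:
  "2 * int (n * (m + 1) div 2) \<le> int n * (int m + 1)"
  "int n * (int m + 1) \<le> 2 * int (n * (m + 1) div 2) + 1"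
proof -
  let ?N = "n * (m + 1)"
  have "2 * (?N div 2) \<le> ?N" "?N \<le> 2 * (?N div 2) + 1"
    by presburger+
  moreover have "int ?N = int n * (int m + 1)"
    by (simp add: algebra_simps)
  ultimately show "2 * int (?N div 2) \<le> int n * (int m + 1)"
    "int n * (int m + 1) \<le> 2 * int (?N div 2) + 1"
    by linarith+
qed

lemma m_le_n_upper_bound:
  assumes "n \<ge> 1" "m \<le> n" "staircase m p"
  shows "\<exists>t. abs_dev m p (r + t * int n) \<le> int (n * (m + 1) div 2)"
proof (rule abs_dev_residue_upper_bound[OF assms(1,3), of 0 "int m"])
  let ?D = "int (n * (m + 1) div 2)"
  show "abs_dev m int k \<le> ?D" if "0 \<le> k" "k \<le> int m" for k
  proof -
    have "abs_dev m int k \<le> abs_dev m int 0"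
      using that by (intro abs_dev_int_le_window_end[where b = "int m"]) auto
    moreover have "2 * abs_dev m int 0 = int m * (int m + 1)"
      using abs_dev_int_nonpos[of 0 m] by simp
    moreover have "int m * (int m + 1) \<le> int n * (int m + 1)"
      using assms(2) by (intro mult_right_mono) auto
    ultimately show ?thesis
      using int_half_product_bounds(2)[of n m] by linarith
  qed
  show "abs_dev m int k1 + abs_dev m int k2 - (int m + 1) * (k2 - k1 - int n) \<le> 2 * ?D + 1"
    if "k1 < 0" "int m < k2" for k1 k2
  proof -
    have "2 * abs_dev m int k1 = (int m + 1) * (int m - 2 * k1)"
      "2 * abs_dev m int k2 = (int m + 1) * (2 * k2 - int m)"
      using abs_dev_int_nonpos[of k1 m] abs_dev_int_ge[of m k2] that by simp_all
    then have "abs_dev m int k1 + abs_dev m int k2 - (int m + 1) * (k2 - k1 - int n)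
        = int n * (int m + 1)"
      by (simp add: algebra_simps)
    then show ?thesis
      using int_half_product_bounds(2)[of n m] by linarith
  qed
qed simp

lemma m_le_n_lower_bound_identity:
  assumes "n \<ge> 1" "m \<le> n" "even (n - m) \<or> m = 0"
  shows "int (n * (m + 1) div 2) \<le> abs_dev m int (- int ((n - m) div 2) + t * int n)"
proof -
  define e where "e = (n - m) div 2"
  define s where "s = (n - m) mod 2"
  have n: "n = m + 2 * e + s" "s \<le> 1"
    using assms(2) unfolding e_def s_def by auto
  have no_below: "{j. j \<le> m \<and> int j < - int e} = {}"
    by auto
  have below: "2 * card {j. j \<le> m \<and> int j < - int e} \<le> m + 1"
    unfolding no_below by simp
  have no_above: "{j. j \<le> m \<and> - int e + int n < int j} = {}"
    using n by auto
  have above: "2 * card {j. j \<le> m \<and> - int e + int n < int j} \<le> m + 1"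
    unfolding no_above by simp
  have "2 * int (n * (m + 1) div 2) \<le> (int m + 1) * (int m + 2 * int e)"
  proof (cases "s = 0")
    case True
    then show ?thesis
      using int_half_product_bounds(1)[of n m] n by (simp add: algebra_simps)
  next
    case False
    then have "m = 0" "n = 2 * e + 1"
      using assms(3) n unfolding s_def by auto
    then show ?thesis
      by simp
  qed
  moreover have "2 * abs_dev m int (- int e) = (int m + 1) * (int m + 2 * int e)"
    using abs_dev_int_nonpos[of "- int e" m] by simp
  moreover have "2 * abs_dev m int (- int e + int n)
      = (int m + 1) * (int m + 2 * int e) + (int m + 1) * (2 * int s)"
    using abs_dev_int_ge[of m "- int e + int n"] n by (simp add: algebra_simps)
  moreover have "0 \<le> (int m + 1) * (2 * int s)"
    by simp
  ultimately have "int (n * (m + 1) div 2) \<le> abs_dev m int (- int e)"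
    "int (n * (m + 1) div 2) \<le> abs_dev m int (- int e + int n)"
    by linarith+
  then show ?thesis
    unfolding e_def[symmetric] by (intro abs_dev_residue_lower_bound[OF assms(1) below above])
qed

lemma two_mult_half_product_odd_gap:
  fixes m n e :: nat
  assumes "n = m + 2 * e + 1"
  shows "2 * (n * (m + 1) div 2) = m * n + 2 * e + 2 * ((m + 1) div 2)"
proof -
  have "even (m * n)"
    using assms by auto
  then obtain K where K: "m * n = 2 * K"
    by blast
  then have "n * (m + 1) = 2 * (K + e) + (m + 1)"
    using assms by (simp add: algebra_simps)
  then have "n * (m + 1) div 2 = K + e + (m + 1) div 2"
    by presburger
  then show ?thesis
    using K by simp
qed

lemma abs_dev_stair_flat_m_le_n_ends:
  assumes n: "n = m + 2 * e + 1" and "1 \<le> m"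
  shows "2 * abs_dev m (stair_flat ((m + 1) div 2)) (- int e - 1)
      = int m * int n + 2 * int e + 2 * int ((m + 1) div 2)"
    and "2 * abs_dev m (stair_flat ((m + 1) div 2)) (- int e - 1 + int n)
      = int m * int n + 2 * int e + 2 * (int m + 1 - int ((m + 1) div 2))"
proof -
  define q where "q = (m - 1) div 2"
  define k where "k = m - 1 - q"
  let ?c = "- int e - 1"
  have m: "m = Suc q + k" "(m + 1) div 2 = Suc q" and qk: "int (q + k) = int m - 1"
    using assms(2) unfolding k_def q_def by auto
  have flat: "abs_dev m (stair_flat (Suc q)) c = abs_dev (q + k) int c + \<bar>c - int q\<bar>" for c
    unfolding m(1) by (rule abs_dev_stair_flat)
  have "2 * abs_dev (q + k) int ?c = (int (q + k) + 1) * (int (q + k) - 2 * ?c)"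
    by (rule abs_dev_int_nonpos) simp
  moreover have "2 * abs_dev (q + k) int (?c + int n)
      = (int (q + k) + 1) * (2 * (?c + int n) - int (q + k))"
    by (rule abs_dev_int_ge) (unfold qk, simp add: n)
  ultimately have "2 * abs_dev (q + k) int ?c = int m * int n"
    "2 * abs_dev (q + k) int (?c + int n) = int m * int n"
    unfolding qk n by (simp_all add: algebra_simps)
  moreover have "\<bar>?c - int q\<bar> = int e + int (Suc q)"
    "\<bar>?c + int n - int q\<bar> = int e + (int m + 1 - int (Suc q))"
    using n m(1) by simp_all
  ultimately show "2 * abs_dev m (stair_flat ((m + 1) div 2)) ?c
      = int m * int n + 2 * int e + 2 * int ((m + 1) div 2)"
    "2 * abs_dev m (stair_flat ((m + 1) div 2)) (?c + int n)
      = int m * int n + 2 * int e + 2 * (int m + 1 - int ((m + 1) div 2))"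
    unfolding m(2) flat by simp_all
qed

text \<open>For odd n - m the identity staircase falls short of the bound by one; repeating the
  middle value once makes up for it.\<close>
lemma m_le_n_lower_bound_flat:
  assumes "m \<le> n" "odd (n - m)" "1 \<le> m"
  shows "int (n * (m + 1) div 2)
    \<le> abs_dev m (stair_flat ((m + 1) div 2)) (- int ((n - m) div 2) - 1 + t * int n)"
proof -
  define e where "e = (n - m) div 2"
  define i where "i = (m + 1) div 2"
  let ?c = "- int e - 1"
  let ?p = "stair_flat i"
  have n: "n = m + 2 * e + 1"
    using assms(1,2) unfolding e_def by presburger
  have "2 * int (n * (m + 1) div 2) = int m * int n + 2 * int e + 2 * int i"
    using arg_cong[OF two_mult_half_product_odd_gap[OF n], of int] unfolding i_def by simp
  moreover have "2 * int i \<le> int m + 1"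
    unfolding i_def by linarith
  moreover have "2 * abs_dev m ?p ?c = int m * int n + 2 * int e + 2 * int i"
    "2 * abs_dev m ?p (?c + int n) = int m * int n + 2 * int e + 2 * (int m + 1 - int i)"
    unfolding i_def by (fact abs_dev_stair_flat_m_le_n_ends[OF n assms(3)])+
  ultimately have T: "int (n * (m + 1) div 2) \<le> abs_dev m ?p ?c"
    "int (n * (m + 1) div 2) \<le> abs_dev m ?p (?c + int n)"
    by arith+
  have "card {j. j \<le> m \<and> ?p j < ?c} \<le> nat ?c"
    by (rule card_stair_flat_less) simp
  moreover have "card {j. j \<le> m \<and> ?c + int n < ?p j} \<le> nat (int m - (?c + int n) - 1)"
    by (rule card_stair_flat_greater) (use n in \<open>unfold i_def, linarith\<close>)
  moreover have "nat ?c = 0" "nat (int m - (?c + int n) - 1) = 0"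
    using n by simp_all
  ultimately have "2 * card {j. j \<le> m \<and> ?p j < ?c} \<le> m + 1"
    "2 * card {j. j \<le> m \<and> ?c + int n < ?p j} \<le> m + 1"
    by linarith+
  with T show ?thesis
    unfolding e_def[symmetric] i_def[symmetric] using abs_dev_residue_lower_bound[of n] n by simp
qed

lemma yoke_ecc_m_le_n:
  assumes "n \<ge> 1" "m \<le> n"
  shows "yoke_ecc n m (yoke_zero m) = n * (m + 1) div 2"
proof (cases "even (n - m) \<or> m = 0")
  case True
  show ?thesis
  proof (rule yoke_ecc_eqI[OF assms(1)])
    show "\<exists>t. abs_dev m p (r + t * int n) \<le> int (n * (m + 1) div 2)" if "staircase m p" for p r
      using m_le_n_upper_bound[OF assms that] .
    show "staircase m int"
      by (simp add: staircase_def)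
    show "int (n * (m + 1) div 2) \<le> abs_dev m int (- int ((n - m) div 2) + t * int n)" for t
      by (rule m_le_n_lower_bound_identity[OF assms True])
  qed
next
  case False
  then have "odd (n - m)" "1 \<le> m"
    by auto
  show ?thesis
  proof (rule yoke_ecc_eqI[OF assms(1)])
    show "\<exists>t. abs_dev m p (r + t * int n) \<le> int (n * (m + 1) div 2)" if "staircase m p" for p r
      using m_le_n_upper_bound[OF assms that] .
    show "staircase m (stair_flat ((m + 1) div 2))"
      using \<open>1 \<le> m\<close> by (intro staircase_stair_flat) simp
    show "int (n * (m + 1) div 2)
        \<le> abs_dev m (stair_flat ((m + 1) div 2)) (- int ((n - m) div 2) - 1 + t * int n)" for t
      by (rule m_le_n_lower_bound_flat[OF assms(2) \<open>odd (n - m)\<close> \<open>1 \<le> m\<close>])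
  qed
qed

section \<open>The case n \<le> m\<close>

lemma two_mult_choose_two: "2 * int ((x + 1) choose 2) = int x * (int x + 1)"
proof -
  have "2 * ((x + 1) choose 2) = x * (x + 1)"
    by (simp add: choose_two)
  then have "int (2 * ((x + 1) choose 2)) = int (x * (x + 1))"
    by (rule arg_cong)
  then show ?thesis
    by (simp add: algebra_simps)
qed

lemma abs_dev_n_le_m_center:
  assumes "m = n + 2 * e + s"
  shows "abs_dev m int (int (e + s)) = int ((n + e + 1 choose 2) + (e + s + 1 choose 2))"
proof -
  have "2 * abs_dev m int (int (e + s))
      = int (e + s) * (int (e + s) + 1) + (int m - int (e + s)) * (int m - int (e + s) + 1)"
    by (rule abs_dev_int_between) (use assms in simp_all)
  also have "int m - int (e + s) = int (n + e)"
    using assms by simp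
  finally show ?thesis
    using two_mult_choose_two[of "n + e"] two_mult_choose_two[of "e + s"] by simp
qed

lemma n_le_m_upper_bound:
  assumes "n \<ge> 1" and m: "m = n + 2 * e + s" and "s \<le> 1" "staircase m p"
    and center: "abs_dev m int (int (e + s)) \<le> D"
    and odd_case: "s = 1 \<Longrightarrow> abs_dev m int (int (e + s)) + int n - int ((m + 2) div 2) \<le> D"
  shows "\<exists>t. abs_dev m p (r + t * int n) \<le> D"
proof -
  define a where "a = int (e + s)"
  define b where "b = int (n + e)"
  have ab: "a + b = int m" "0 \<le> a" "a \<le> b"
    using assms(1-3) unfolding a_def b_def by simp_all
  show ?thesis
  proof (rule abs_dev_residue_upper_bound[OF assms(1,4) \<open>a \<le> b\<close>])
    show "abs_dev m int k \<le> D" if "a \<le> k" "k \<le> b" for k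
      using abs_dev_int_le_window_end[of a k b m] ab that center unfolding a_def by linarith
    show "abs_dev m int k1 + abs_dev m int k2 - (int m + 1) * (k2 - k1 - int n) \<le> 2 * D + 1"
      if "k1 < a" "b < k2" for k1 k2
    proof -
      have "(int m + 1) * (k2 - k1 - (b - a + 2))
          = (int m + 1) * (k2 - k1 - int n) - (int m + 1) * (2 - int s)"
        unfolding a_def b_def by (simp add: algebra_simps)
      moreover have "2 * abs_dev m int a + 2 * (b - a + 1) - (int m + 1) * (2 - int s) \<le> 2 * D + 1"
      proof (cases "s = 0")
        case True
        then show ?thesis
          using center m unfolding a_def b_def by simp
      next
        case False
        then have "s = 1"
          using assms(3) by simp
        moreover have "int m + 1 \<le> 2 * int ((m + 2) div 2)"
          by linarith
        ultimately show ?thesis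
          using odd_case center unfolding a_def b_def by simp
      qed
      ultimately show ?thesis
        using abs_dev_int_outside_window[OF ab(2,3,1) that] by linarith
    qed
  qed
qed

lemma n_le_m_lower_bound_identity:
  assumes "n \<ge> 1" and m: "m = n + 2 * e + s" and "s \<le> 1"
  shows "abs_dev m int (int (e + s)) \<le> abs_dev m int (int (e + s) + t * int n)"
proof (rule abs_dev_residue_lower_bound[OF assms(1)])
  let ?a = "int (e + s)"
  show "2 * card {j. j \<le> m \<and> int j < ?a} \<le> m + 1"
    using card_int_less[of m ?a] m assms(3) by linarith
  show "2 * card {j. j \<le> m \<and> ?a + int n < int j} \<le> m + 1"
    using card_int_greater[of m "?a + int n"] m by linarith
  have "2 * abs_dev m int (?a + int n)
      = (?a + int n) * (?a + int n + 1) + (int m - (?a + int n)) * (int m - (?a + int n) + 1)"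
    by (rule abs_dev_int_between) (use m in simp_all)
  moreover have "2 * abs_dev m int ?a = ?a * (?a + 1) + (int m - ?a) * (int m - ?a + 1)"
    by (rule abs_dev_int_between) (use m in simp_all)
  moreover have "s = 0 \<or> s = 1"
    using assms(3) by auto
  ultimately show "abs_dev m int ?a \<le> abs_dev m int (?a + int n)"
    using m by (auto simp: algebra_simps)
qed simp

lemma abs_dev_stair_flat_n_le_m_ends:
  assumes m: "m = n + 2 * e + 1"
  shows "2 * abs_dev m (stair_flat (e + n div 2 + 1)) (int e)
      = int e * (int e + 1) + int (n + e) * (int (n + e) + 1) + 2 * int (n div 2)"
    and "2 * abs_dev m (stair_flat (e + n div 2 + 1)) (int e + int n)
      = int e * (int e + 1) + int (n + e) * (int (n + e) + 1) + 2 * (int n - int (n div 2))"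
proof -
  define q where "q = e + n div 2"
  define k where "k = n + 2 * e - q"
  have mq: "m = Suc q + k" "q + k = n + 2 * e"
    using m unfolding k_def q_def by simp_all
  have flat: "abs_dev m (stair_flat (Suc q)) c = abs_dev (q + k) int c + \<bar>c - int q\<bar>" for c
    unfolding mq(1) by (rule abs_dev_stair_flat)
  have "2 * abs_dev (q + k) int (int e) = int e * (int e + 1) + int (n + e) * (int (n + e) + 1)"
    "2 * abs_dev (q + k) int (int e + int n) = int e * (int e + 1) + int (n + e) * (int (n + e) + 1)"
    using abs_dev_int_between[of "int e" "q + k"] abs_dev_int_between[of "int e + int n" "q + k"]
    unfolding mq(2) by (simp_all add: algebra_simps)
  moreover have "\<bar>int e - int q\<bar> = int (n div 2)"
    "\<bar>int e + int n - int q\<bar> = int n - int (n div 2)"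
    unfolding q_def by simp_all
  ultimately show "2 * abs_dev m (stair_flat (e + n div 2 + 1)) (int e)
      = int e * (int e + 1) + int (n + e) * (int (n + e) + 1) + 2 * int (n div 2)"
    "2 * abs_dev m (stair_flat (e + n div 2 + 1)) (int e + int n)
      = int e * (int e + 1) + int (n + e) * (int (n + e) + 1) + 2 * (int n - int (n div 2))"
    unfolding q_def[symmetric] Suc_eq_plus1[symmetric] flat by simp_all
qed

lemma n_le_m_lower_bound_flat:
  assumes "n \<ge> 1" and m: "m = n + 2 * e + 1"
  shows "abs_dev m int (int (e + 1)) + int n - int ((m + 2) div 2)
    \<le> abs_dev m (stair_flat (e + n div 2 + 1)) (int e + t * int n)"
proof -
  define h where "h = n div 2"
  let ?p = "stair_flat (e + h + 1)"
  have "n = 2 * h + n mod 2"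
    unfolding h_def by simp
  then have n: "int n = 2 * int h + int (n mod 2)" "0 \<le> int (n mod 2)"
    by (metis of_nat_add of_nat_mult of_nat_numeral, simp)
  have "m + 2 = 2 * (e + h + 1 + n mod 2) + (1 - n mod 2)"
    using m n unfolding h_def by simp
  then have "int ((m + 2) div 2) = int e + int h + 1 + int (n mod 2)"
    by simp
  moreover have "2 * abs_dev m int (int (e + 1))
      = int (n + e) * (int (n + e) + 1) + int (e + 1) * (int (e + 1) + 1)"
    using abs_dev_n_le_m_center[of m n e 1] two_mult_choose_two[of "n + e"] two_mult_choose_two[of "e + 1"] m
    by simp
  moreover have "int (e + 1) * (int (e + 1) + 1) = int e * (int e + 1) + 2 * int e + 2"
    by (simp add: algebra_simps)
  moreover note abs_dev_stair_flat_n_le_m_ends[OF m, folded h_def]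
  ultimately have T: "abs_dev m int (int (e + 1)) + int n - int ((m + 2) div 2) \<le> abs_dev m ?p (int e)"
    "abs_dev m int (int (e + 1)) + int n - int ((m + 2) div 2) \<le> abs_dev m ?p (int e + int n)"
    using n by (smt (verit))+
  have "2 * card {j. j \<le> m \<and> ?p j < int e} \<le> m + 1"
    using card_stair_flat_less[of "int e" "e + h + 1" m] m by simp
  moreover have "2 * card {j. j \<le> m \<and> int e + int n < ?p j} \<le> m + 1"
    using card_stair_flat_greater[of "e + h + 1" "int e + int n" m] m n unfolding h_def by simp
  ultimately show ?thesis
    using abs_dev_residue_lower_bound[OF assms(1) _ _ T] unfolding h_def by simp
qed

lemma n_le_m_parameters:
  fixes m n :: nat
  assumes "n \<le> m"
  obtains e s where "m = n + 2 * e + s" "s \<le> 1" "(m + n) div 2 = n + e" "(m - n + 1) div 2 = e + s"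
    "2 dvd (m - n) \<longleftrightarrow> s = 0"
proof -
  define e where "e = (m - n) div 2"
  define s where "s = (m - n) mod 2"
  have m: "m = n + 2 * e + s" "s \<le> 1"
    using assms unfolding e_def s_def by auto
  moreover have "s = 0 \<or> s = 1"
    using m(2) by auto
  then have "(m + n) div 2 = n + e" "(m - n + 1) div 2 = e + s"
    using m(1) by auto
  moreover have "2 dvd (m - n) \<longleftrightarrow> s = 0"
    unfolding s_def by (simp add: dvd_eq_mod_eq_0)
  ultimately show thesis
    using that by blast
qed

lemma yoke_ecc_n_le_m:
  assumes "1 \<le> n" "n \<le> m" "2 dvd (m - n) \<or> n \<le> (m + 2) div 2"
  shows "yoke_ecc n m (yoke_zero m) = ((m + n) div 2 + 1 choose 2) + ((m - n + 1) div 2 + 1 choose 2)"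
proof -
  obtain e s where m: "m = n + 2 * e + s" "s \<le> 1" and halves: "(m + n) div 2 = n + e"
    "(m - n + 1) div 2 = e + s" and parity: "2 dvd (m - n) \<longleftrightarrow> s = 0"
    using n_le_m_parameters[OF assms(2)] by blast
  let ?D = "(n + e + 1 choose 2) + (e + s + 1 choose 2)"
  have center: "abs_dev m int (int (e + s)) = int ?D"
    using abs_dev_n_le_m_center[OF m(1)] by simp
  have "yoke_ecc n m (yoke_zero m) = ?D"
  proof (rule yoke_ecc_eqI[OF assms(1)])
    show "\<exists>t. abs_dev m p (r + t * int n) \<le> int ?D" if "staircase m p" for p r
      using assms(3) parity center
      by (intro n_le_m_upper_bound[OF assms(1) m that]) auto
    show "staircase m int"
      by (simp add: staircase_def)
    show "int ?D \<le> abs_dev m int (int (e + s) + t * int n)" for t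
      using n_le_m_lower_bound_identity[OF assms(1) m] center by simp
  qed
  then show ?thesis
    unfolding halves .
qed

lemma yoke_ecc_n_le_m_exceptional:
  assumes "n \<le> m" "\<not> (2 dvd (m - n) \<or> n \<le> (m + 2) div 2)"
  shows "yoke_ecc n m (yoke_zero m) =
    ((m + n) div 2 + 1 choose 2) + ((m - n + 1) div 2 + 1 choose 2) + n - (m + 2) div 2"
proof -
  obtain e s where m: "m = n + 2 * e + s" "s \<le> 1" and halves: "(m + n) div 2 = n + e"
    "(m - n + 1) div 2 = e + s" and parity: "2 dvd (m - n) \<longleftrightarrow> s = 0"
    using n_le_m_parameters[OF assms(1)] by blast
  have "s = 1" "n \<ge> 1"
    using assms(2) parity m(2) by auto
  let ?D = "(n + e + 1 choose 2) + (e + 1 + 1 choose 2) + n - (m + 2) div 2"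
  have D: "int ?D = abs_dev m int (int (e + 1)) + int n - int ((m + 2) div 2)"
    using abs_dev_n_le_m_center[of m n e 1] assms(2) m(1) \<open>s = 1\<close> by simp
  have "yoke_ecc n m (yoke_zero m) = ?D"
  proof (rule yoke_ecc_eqI[OF \<open>n \<ge> 1\<close>])
    show "\<exists>t. abs_dev m p (r + t * int n) \<le> int ?D" if "staircase m p" for p r
      using assms(2) D m(1) \<open>s = 1\<close>
      by (intro n_le_m_upper_bound[OF \<open>n \<ge> 1\<close> m that]) auto
    show "staircase m (stair_flat (e + n div 2 + 1))"
      by (rule staircase_stair_flat) simp
    show "int ?D \<le> abs_dev m (stair_flat (e + n div 2 + 1)) (int e + t * int n)" for t
      unfolding D using n_le_m_lower_bound_flat[OF \<open>n \<ge> 1\<close>] m(1) \<open>s = 1\<close> by simp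
  qed
  then show ?thesis
    unfolding halves \<open>s = 1\<close> .
qed

theorem theorem4p1:
  fixes n m :: nat
  assumes "n \<ge> 1"
  shows "(n = 1 \<longrightarrow>
            yoke_ecc n m (yoke_zero m) =
              (((m + 1) div 2 + 1) choose 2) + ((m div 2 + 1) choose 2))
       \<and> (m \<le> n \<longrightarrow> yoke_ecc n m (yoke_zero m) = n * (m + 1) div 2)
       \<and> (2 \<le> n \<and> n \<le> m \<longrightarrow>
            (let d0 = (((m + n) div 2 + 1) choose 2) + (((m - n + 1) div 2 + 1) choose 2)
             in (2 dvd (m - n) \<or> n \<le> (m + 2) div 2 \<longrightarrow> yoke_ecc n m (yoke_zero m) = d0)
              \<and> (\<not> (2 dvd (m - n) \<or> n \<le> (m + 2) div 2) \<longrightarrow>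
                   yoke_ecc n m (yoke_zero m) = d0 + n - (m + 2) div 2)))"
proof -
  (* For m > 0 the case n <= m applies, and its formula specialises to this one. *)
  have single_bucket: "yoke_ecc 1 m (yoke_zero m) = ((m + 1) div 2 + 1 choose 2) + (m div 2 + 1 choose 2)"
  proof (cases "m = 0")
    case True
    then show ?thesis
      using yoke_ecc_m_le_n[of 1 m] by simp
  next
    case False
    then show ?thesis
      using yoke_ecc_n_le_m[of 1 m] by simp
  qed
  show ?thesis
    using single_bucket yoke_ecc_m_le_n[OF assms] yoke_ecc_n_le_m[OF assms] yoke_ecc_n_le_m_exceptional
    unfolding Let_def by auto
qed

end
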